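(* Let $(G,\prec)$ be a POP-graph. (1) For every $i\in I(G)$ and $e\in E(G)\setminus I(G)$: $i^-(e)\preceq i\preceq i^+(e)$ if and only if $i\to e$. (2) For every $o\in O(G)$ and $e\in E(G)\setminus O(G)$: $o^-(e)\preceq o\preceq o^+(e)$ if and only if $e\to o$.
   Context: A progressive graph is a finite directed acyclic graph (parallel edges allowed) in which every source and every sink has degree one; degree-one vertices are boundary vertices. $I(G)$ is the set of input edges (initial vertex a boundary vertex), $O(G)$ the set of output edges (terminal vertex a boundary vertex). For edges write $e\to e'$ if $e\neq e'$ and there is a directed path whose first edge is $e$ and last edge is $e'$. A planar order on $G$ is a linear order $\prec$ on $E(G)$ such that (P1) $e_1\to e_2$ implies $e_1\prec e_2$; (P2) if $e_1\prec e_2\prec e_3$ and $e_1\to e_3$ then $e_1\to e_2$ or $e_2\to e_3$. A POP-graph is a progressive graph with a planar order. For an edge $e$, $i^-(e)$ and $i^+(e)$ are the $\prec$-minimum and $\prec$-maximum of $\{i\in I(G): i\to e\}$, and $o^-(e)$, $o^+(e)$ are the $\prec$-minimum and $\prec$-maximum of $\{o\in O(G): e\to o\}$. *)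

theory Defs
  imports Main
begin

text \<open>A directed graph with parallel edges: vertex set V, edge set E,
  initial vertex map s and terminal vertex map t.\<close>

definition indeg :: "'e set \<Rightarrow> ('e \<Rightarrow> 'v) \<Rightarrow> 'v \<Rightarrow> nat" where
  "indeg E t v = card {e \<in> E. t e = v}"

definition outdeg :: "'e set \<Rightarrow> ('e \<Rightarrow> 'v) \<Rightarrow> 'v \<Rightarrow> nat" where
  "outdeg E s v = card {e \<in> E. s e = v}"

definition vdeg :: "'e set \<Rightarrow> ('e \<Rightarrow> 'v) \<Rightarrow> ('e \<Rightarrow> 'v) \<Rightarrow> 'v \<Rightarrow> nat" where
  "vdeg E s t v = indeg E t v + outdeg E s v"

definition progressive_graph ::
  "'v set \<Rightarrow> 'e set \<Rightarrow> ('e \<Rightarrow> 'v) \<Rightarrow> ('e \<Rightarrow> 'v) \<Rightarrow> bool" where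
  "progressive_graph V E s t \<longleftrightarrow>
     finite V \<and> finite E \<and> (\<forall>e\<in>E. s e \<in> V \<and> t e \<in> V) \<and>
     acyclic {(s e, t e) | e. e \<in> E} \<and>
     (\<forall>v\<in>V. (indeg E t v = 0 \<or> outdeg E s v = 0) \<longrightarrow> vdeg E s t v = 1)"

definition boundary :: "'v set \<Rightarrow> 'e set \<Rightarrow> ('e \<Rightarrow> 'v) \<Rightarrow> ('e \<Rightarrow> 'v) \<Rightarrow> 'v \<Rightarrow> bool" where
  "boundary V E s t v \<longleftrightarrow> v \<in> V \<and> vdeg E s t v = 1"

definition input_edges :: "'v set \<Rightarrow> 'e set \<Rightarrow> ('e \<Rightarrow> 'v) \<Rightarrow> ('e \<Rightarrow> 'v) \<Rightarrow> 'e set" where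
  "input_edges V E s t = {e \<in> E. boundary V E s t (s e)}"

definition output_edges :: "'v set \<Rightarrow> 'e set \<Rightarrow> ('e \<Rightarrow> 'v) \<Rightarrow> ('e \<Rightarrow> 'v) \<Rightarrow> 'e set" where
  "output_edges V E s t = {e \<in> E. boundary V E s t (t e)}"

definition edge_succ :: "'e set \<Rightarrow> ('e \<Rightarrow> 'v) \<Rightarrow> ('e \<Rightarrow> 'v) \<Rightarrow> 'e rel" where
  "edge_succ E s t = {(e, e'). e \<in> E \<and> e' \<in> E \<and> t e = s e'}"

definition arrow :: "'e set \<Rightarrow> ('e \<Rightarrow> 'v) \<Rightarrow> ('e \<Rightarrow> 'v) \<Rightarrow> 'e \<Rightarrow> 'e \<Rightarrow> bool" where
  "arrow E s t e e' \<longleftrightarrow> e \<noteq> e' \<and> (e, e') \<in> (edge_succ E s t)\<^sup>+"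

text \<open>Planar order: a (reflexive) linear order P on E; strict part is x \<prec> y.\<close>
definition planar_order ::
  "'v set \<Rightarrow> 'e set \<Rightarrow> ('e \<Rightarrow> 'v) \<Rightarrow> ('e \<Rightarrow> 'v) \<Rightarrow> 'e rel \<Rightarrow> bool" where
  "planar_order V E s t P \<longleftrightarrow>
     linear_order_on E P \<and>
     (\<forall>e1\<in>E. \<forall>e2\<in>E. arrow E s t e1 e2 \<longrightarrow> (e1, e2) \<in> P \<and> e1 \<noteq> e2) \<and>
     (\<forall>e1\<in>E. \<forall>e2\<in>E. \<forall>e3\<in>E.
        (e1, e2) \<in> P \<and> e1 \<noteq> e2 \<and> (e2, e3) \<in> P \<and> e2 \<noteq> e3 \<and> arrow E s t e1 e3
        \<longrightarrow> arrow E s t e1 e2 \<or> arrow E s t e2 e3)"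

definition pop_graph ::
  "'v set \<Rightarrow> 'e set \<Rightarrow> ('e \<Rightarrow> 'v) \<Rightarrow> ('e \<Rightarrow> 'v) \<Rightarrow> 'e rel \<Rightarrow> bool" where
  "pop_graph V E s t P \<longleftrightarrow> progressive_graph V E s t \<and> planar_order V E s t P"

definition ord_min :: "'e rel \<Rightarrow> 'e set \<Rightarrow> 'e" where
  "ord_min P S = (THE x. x \<in> S \<and> (\<forall>y\<in>S. (x, y) \<in> P))"

definition ord_max :: "'e rel \<Rightarrow> 'e set \<Rightarrow> 'e" where
  "ord_max P S = (THE x. x \<in> S \<and> (\<forall>y\<in>S. (y, x) \<in> P))"

definition i_minus where
  "i_minus V E s t P e = ord_min P {i \<in> input_edges V E s t. arrow E s t i e}"
definition i_plus where
  "i_plus V E s t P e = ord_max P {i \<in> input_edges V E s t. arrow E s t i e}"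
definition o_minus where
  "o_minus V E s t P e = ord_min P {ou \<in> output_edges V E s t. arrow E s t e ou}"
definition o_plus where
  "o_plus V E s t P e = ord_max P {ou \<in> output_edges V E s t. arrow E s t e ou}"

end

theory Submission
  imports Defs
begin

text \<open>
  For a non-input edge e, the input edges i with i \<rightarrow> e form a nonempty set: walking
  backwards from e in the finite acyclic graph ends at an input edge. Let a and b be its
  \<prec>-least and \<prec>-greatest elements. If a \<prec> i \<prec> b for an input edge i, then i \<prec> b \<prec> e
  by (P1), so (P2) applied to a \<prec> i \<prec> e gives a \<rightarrow> i or i \<rightarrow> e, and a \<rightarrow> i is
  impossible because no edge enters an input edge. Reversing all edges and the order
  exchanges inputs with outputs and i-minus, i-plus with o-plus, o-minus, turning (1) into (2).
\<close>

lemma linear_order_on_finite_has_least: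
  assumes lin: "linear_order_on E P" and "S \<subseteq> E" "finite S" "S \<noteq> {}"
  shows "\<exists>x\<in>S. \<forall>y\<in>S. (x, y) \<in> P"
  using assms(3,4,2)
proof (induction S rule: finite_ne_induct)
  case (singleton x)
  then show ?case using lin unfolding order_on_defs refl_on_def by auto
next
  case (insert a F)
  then obtain x where x: "x \<in> F" "\<forall>y\<in>F. (x, y) \<in> P" by auto
  have "a \<in> E" "x \<in> E" using x(1) insert.prems by auto
  moreover have "refl_on E P" "total_on E P" using lin unfolding order_on_defs by auto
  ultimately have "(a, a) \<in> P" and "(a, x) \<in> P \<or> (x, a) \<in> P"
    by (metis refl_onD totalp_onD totalp_on_total_on_eq)+
  from this(2) show ?case
  proof
    assume "(a, x) \<in> P"
    then have "\<forall>y\<in>F. (a, y) \<in> P"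
      using x(2) lin unfolding order_on_defs by (meson transD)
    with \<open>(a, a) \<in> P\<close> show ?case by blast
  next
    assume "(x, a) \<in> P"
    with x show ?case by blast
  qed
qed

lemma ord_min_least:
  assumes lin: "linear_order_on E P" and "S \<subseteq> E" "finite S" "S \<noteq> {}"
  shows "ord_min P S \<in> S" "\<forall>y\<in>S. (ord_min P S, y) \<in> P"
proof -
  obtain x where x: "x \<in> S" "\<forall>y\<in>S. (x, y) \<in> P"
    using linear_order_on_finite_has_least[OF assms] by blast
  have "antisym P" using lin unfolding order_on_defs by auto
  then have "ord_min P S = x"
    unfolding ord_min_def using x by (blast intro: the_equality dest: antisymD)
  then show "ord_min P S \<in> S" "\<forall>y\<in>S. (ord_min P S, y) \<in> P" using x by simp_all
qed

lemma ord_max_eq_ord_min_converse: "ord_max P S = ord_min (P\<inverse>) S"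
  unfolding ord_max_def ord_min_def by simp

lemma ord_max_greatest:
  assumes "linear_order_on E P" and "S \<subseteq> E" "finite S" "S \<noteq> {}"
  shows "ord_max P S \<in> S" "\<forall>y\<in>S. (y, ord_max P S) \<in> P"
  using ord_min_least[of E "P\<inverse>" S] assms
  by (simp_all add: ord_max_eq_ord_min_converse)

lemma vdeg_swap: "vdeg E t s v = vdeg E s t v"
  unfolding vdeg_def indeg_def outdeg_def by simp

lemma progressive_graph_swap:
  assumes "progressive_graph V E s t"
  shows "progressive_graph V E t s"
proof -
  have "{(t e, s e) | e. e \<in> E} = {(s e, t e) | e. e \<in> E}\<inverse>" by auto
  moreover have "indeg E s v = outdeg E s v" "outdeg E t v = indeg E t v" for v
    unfolding indeg_def outdeg_def by simp_all
  ultimately show ?thesis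
    using assms unfolding progressive_graph_def by (auto simp: vdeg_swap)
qed

lemma input_edges_swap: "input_edges V E t s = output_edges V E s t"
  unfolding input_edges_def output_edges_def boundary_def by (simp add: vdeg_swap)

text \<open>Permutative: rewrite only with an instance such as arrow_swap[of E t s], or unfolding loops.\<close>

lemma arrow_swap: "arrow E t s e e' \<longleftrightarrow> arrow E s t e' e"
proof -
  have "edge_succ E t s = (edge_succ E s t)\<inverse>"
    unfolding edge_succ_def by auto
  then show ?thesis
    unfolding arrow_def by (auto simp: trancl_converse)
qed

lemma planar_order_swap:
  assumes "planar_order V E s t P"
  shows "planar_order V E t s (P\<inverse>)"
proof -
  have "linear_order_on E (P\<inverse>)" using assms unfolding planar_order_def by simp
  moreover have "\<forall>e1\<in>E. \<forall>e2\<in>E. arrow E t s e1 e2 \<longrightarrow> (e1, e2) \<in> P\<inverse> \<and> e1 \<noteq> e2"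
    using assms unfolding planar_order_def arrow_swap[of E t s] by auto
  moreover have "\<forall>e1\<in>E. \<forall>e2\<in>E. \<forall>e3\<in>E.
      (e1, e2) \<in> P\<inverse> \<and> e1 \<noteq> e2 \<and> (e2, e3) \<in> P\<inverse> \<and> e2 \<noteq> e3 \<and> arrow E t s e1 e3
      \<longrightarrow> arrow E t s e1 e2 \<or> arrow E t s e2 e3"
    using assms unfolding planar_order_def arrow_swap[of E t s] converse_iff by metis
  ultimately show ?thesis unfolding planar_order_def by blast
qed

lemma pop_graph_swap:
  "pop_graph V E s t P \<Longrightarrow> pop_graph V E t s (P\<inverse>)"
  unfolding pop_graph_def by (simp add: progressive_graph_swap planar_order_swap)

lemma i_minus_swap: "i_minus V E t s (P\<inverse>) e = o_plus V E s t P e"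
  unfolding i_minus_def o_plus_def input_edges_swap arrow_swap[of E t s]
  by (simp add: ord_max_eq_ord_min_converse)

lemma i_plus_swap: "i_plus V E t s (P\<inverse>) e = o_minus V E s t P e"
  unfolding i_plus_def o_minus_def input_edges_swap arrow_swap[of E t s]
  by (simp add: ord_max_eq_ord_min_converse)

lemma input_edges_iff_no_predecessor:
  assumes pg: "progressive_graph V E s t" and e: "e \<in> E"
  shows "e \<in> input_edges V E s t \<longleftrightarrow> (\<nexists>g. g \<in> E \<and> t g = s e)"
proof -
  have fin: "finite E" and V: "s e \<in> V"
    using pg e unfolding progressive_graph_def by auto
  have "outdeg E s (s e) \<noteq> 0"
    unfolding outdeg_def using fin e by (auto simp: card_eq_0_iff)
  moreover have "indeg E t (s e) = 0 \<longleftrightarrow> (\<nexists>g. g \<in> E \<and> t g = s e)"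
    unfolding indeg_def using fin by (auto simp: card_eq_0_iff)
  moreover have "indeg E t (s e) = 0 \<longrightarrow> vdeg E s t (s e) = 1"
    using pg V unfolding progressive_graph_def by auto
  ultimately show ?thesis
    using e V unfolding input_edges_def boundary_def vdeg_def by auto
qed

lemma edge_succ_trancl_vertices:
  "(e, e') \<in> (edge_succ E s t)\<^sup>+ \<Longrightarrow> (s e, s e') \<in> {(s e, t e) | e. e \<in> E}\<^sup>+"
proof (induction rule: trancl_induct)
  case (base e')
  then have "(s e, s e') \<in> {(s e, t e) | e. e \<in> E}"
    unfolding edge_succ_def by force
  then show ?case by (rule r_into_trancl)
next
  case (step e' e'')
  then have "(s e', s e'') \<in> {(s e, t e) | e. e \<in> E}"
    unfolding edge_succ_def by force
  with step.IH show ?case by (rule trancl_into_trancl)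
qed

lemma acyclic_edge_succ:
  assumes "progressive_graph V E s t"
  shows "acyclic (edge_succ E s t)"
proof (rule acyclicI, intro allI notI)
  fix e
  assume "(e, e) \<in> (edge_succ E s t)\<^sup>+"
  then have "(s e, s e) \<in> {(s e, t e) | e. e \<in> E}\<^sup>+"
    by (rule edge_succ_trancl_vertices)
  moreover have "acyclic {(s e, t e) | e. e \<in> E}"
    using assms unfolding progressive_graph_def by auto
  ultimately show False
    unfolding acyclic_def by auto
qed

lemma no_arrow_into_input:
  assumes pg: "progressive_graph V E s t" and i: "i \<in> input_edges V E s t"
  shows "\<not> arrow E s t e i"
proof
  assume "arrow E s t e i"
  then obtain g where "(g, i) \<in> edge_succ E s t"
    unfolding arrow_def by (meson tranclE)
  then show False
    using input_edges_iff_no_predecessor[OF pg] i unfolding edge_succ_def by auto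
qed

lemma wf_edge_succ:
  assumes pg: "progressive_graph V E s t"
  shows "wf (edge_succ E s t)"
proof (rule finite_acyclic_wf)
  have "edge_succ E s t \<subseteq> E \<times> E" unfolding edge_succ_def by auto
  then show "finite (edge_succ E s t)"
    using pg unfolding progressive_graph_def by (auto intro: finite_subset)
qed (rule acyclic_edge_succ[OF pg])

lemma reached_from_input:
  assumes pg: "progressive_graph V E s t" and "e \<in> E"
  shows "\<exists>i\<in>input_edges V E s t. (i, e) \<in> (edge_succ E s t)\<^sup>*"
  using wf_edge_succ[OF pg] \<open>e \<in> E\<close>
proof (induction e rule: wf_induct_rule)
  case (less e)
  show ?case
  proof (cases "e \<in> input_edges V E s t")
    case False
    then obtain g where "g \<in> E" "t g = s e"
      using input_edges_iff_no_predecessor[OF pg less.prems] by auto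
    then have "(g, e) \<in> edge_succ E s t"
      using less.prems unfolding edge_succ_def by auto
    with less.IH \<open>g \<in> E\<close> show ?thesis
      by (meson rtrancl.rtrancl_into_rtrancl)
  qed auto
qed

lemma arrow_from_input:
  assumes "progressive_graph V E s t" and "e \<in> E - input_edges V E s t"
  shows "\<exists>i\<in>input_edges V E s t. arrow E s t i e"
  using reached_from_input[OF assms(1)] assms
  by (metis DiffE arrow_def rtranclD)

lemma input_interval_iff_arrow:
  assumes pop: "pop_graph V E s t P"
    and i: "i \<in> input_edges V E s t" and e: "e \<in> E - input_edges V E s t"
  shows "((i_minus V E s t P e, i) \<in> P \<and> (i, i_plus V E s t P e) \<in> P)
           \<longleftrightarrow> arrow E s t i e"
proof -
  have pg: "progressive_graph V E s t" and lin: "linear_order_on E P"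
    and P1: "\<And>e1 e2. e1 \<in> E \<Longrightarrow> e2 \<in> E \<Longrightarrow> arrow E s t e1 e2 \<Longrightarrow> (e1, e2) \<in> P \<and> e1 \<noteq> e2"
    and P2: "\<And>e1 e2 e3. e1 \<in> E \<Longrightarrow> e2 \<in> E \<Longrightarrow> e3 \<in> E \<Longrightarrow>
               (e1, e2) \<in> P \<Longrightarrow> e1 \<noteq> e2 \<Longrightarrow> (e2, e3) \<in> P \<Longrightarrow> e2 \<noteq> e3 \<Longrightarrow>
               arrow E s t e1 e3 \<Longrightarrow> arrow E s t e1 e2 \<or> arrow E s t e2 e3"
    using pop unfolding pop_graph_def planar_order_def by blast+
  define S where "S = {i \<in> input_edges V E s t. arrow E s t i e}"
  define a where "a = i_minus V E s t P e"
  define b where "b = i_plus V E s t P e"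
  have SE: "S \<subseteq> E" unfolding S_def input_edges_def by auto
  have fin: "finite S"
    using pg SE unfolding progressive_graph_def by (auto intro: finite_subset)
  have "S \<noteq> {}" using arrow_from_input[OF pg e] unfolding S_def by blast
  then have a: "a \<in> S" "\<forall>y\<in>S. (a, y) \<in> P" and b: "b \<in> S" "\<forall>y\<in>S. (y, b) \<in> P"
    using ord_min_least[OF lin SE fin] ord_max_greatest[OF lin SE fin]
    unfolding a_def b_def i_minus_def i_plus_def S_def by auto
  have iE: "i \<in> E" and eE: "e \<in> E" and "a \<in> E" "b \<in> E"
    using i e a b SE unfolding input_edges_def by auto
  have "arrow E s t i e" if between: "(a, i) \<in> P" "(i, b) \<in> P" and "i \<noteq> a" "i \<noteq> b"
  proof -
    have "(b, e) \<in> P" using P1 b \<open>b \<in> E\<close> eE unfolding S_def by blast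
    then have "(i, e) \<in> P"
      using between lin unfolding order_on_defs trans_def by blast
    moreover have "i \<noteq> e" using i e by auto
    ultimately have "arrow E s t a i \<or> arrow E s t i e"
      using P2[of a i e] \<open>a \<in> E\<close> iE eE between \<open>i \<noteq> a\<close> a unfolding S_def by auto
    then show ?thesis using no_arrow_into_input[OF pg i] by blast
  qed
  moreover have "arrow E s t i e \<Longrightarrow> (a, i) \<in> P \<and> (i, b) \<in> P"
    using a b i unfolding S_def by blast
  ultimately show ?thesis
    using a b unfolding a_def b_def S_def by blast
qed

theorem lemma3p2:
  fixes V :: "'v set" and E :: "'e set" and s t :: "'e \<Rightarrow> 'v" and P :: "'e rel"
  assumes "pop_graph V E s t P"
  shows "(\<forall>i\<in>input_edges V E s t. \<forall>e\<in>E - input_edges V E s t.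
            ((i_minus V E s t P e, i) \<in> P \<and> (i, i_plus V E s t P e) \<in> P)
              \<longleftrightarrow> arrow E s t i e)
       \<and> (\<forall>ou\<in>output_edges V E s t. \<forall>e\<in>E - output_edges V E s t.
            ((o_minus V E s t P e, ou) \<in> P \<and> (ou, o_plus V E s t P e) \<in> P)
              \<longleftrightarrow> arrow E s t e ou)"
proof (intro conjI ballI)
  fix i e
  assume "i \<in> input_edges V E s t" "e \<in> E - input_edges V E s t"
  then show "((i_minus V E s t P e, i) \<in> P \<and> (i, i_plus V E s t P e) \<in> P) \<longleftrightarrow> arrow E s t i e"
    using input_interval_iff_arrow[OF assms] by blast
next
  fix ou e
  assume "ou \<in> output_edges V E s t" "e \<in> E - output_edges V E s t"
  then show "((o_minus V E s t P e, ou) \<in> P \<and> (ou, o_plus V E s t P e) \<in> P) \<longleftrightarrow> arrow E s t e ou"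
    using input_interval_iff_arrow[OF pop_graph_swap[OF assms], of ou e]
    by (auto simp: input_edges_swap i_minus_swap i_plus_swap arrow_swap[of E t s])
qed

end
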